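(* Let $\epsilon\in(0,1)$ and consider the lower-bound construction with $d\ge\max\{d_s\log n_1,\log^2 n_1\}$, $n_1\ge 2d^3$, $\epsilon d_s$ an integer, and $d_s\ge C/\epsilon$ for a sufficiently large absolute constant $C$. Let $\mathcal{G}_1$ be the construction with $x=d_s$ and $\mathcal{G}_2$ the construction with $x=(1-\epsilon)d_s$. Then $$|r_{\mathcal{G}_1}(s,t)-r_{\mathcal{G}_2}(s,t)|>\frac{\epsilon}{4}\,r_{\mathcal{G}_1}(s,t).$$
   Context: Lower-bound construction: $S_1$ and $S_2$ are disjoint vertex sets with $|S_1|=n_1$, $|S_2|=n_2$, $n_2\ll n_1$. On $S_1$ there is a $d$-regular expander graph (spectral gap of its normalized Laplacian bounded below by an absolute constant); $S_2$ has no internal edges. A source vertex $s$ is added with $d_s$ neighbors: $x$ vertices $\mathcal{N}_1\subset S_1$ and $d_s-x$ vertices $\mathcal{N}_2\subset S_2$, chosen uniformly at random. A sink vertex $t$ is added and joined to every vertex of $S_1\cup S_2$. There are no other edges. $r_{\mathcal{G}}(s,t)=(\mathbf{e}_s-\mathbf{e}_t)^T\mathbf{L}^\dagger(\mathbf{e}_s-\mathbf{e}_t)$ with $\mathbf{L}$ the Laplacian of $\mathcal{G}$. *)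

theory Defs
  imports Complex_Main
begin

text \<open>Matrices over a finite vertex set V are functions nat => nat => real,
  taken to be 0 outside V x V.\<close>

definition mmul :: "nat set \<Rightarrow> (nat \<Rightarrow> nat \<Rightarrow> real) \<Rightarrow> (nat \<Rightarrow> nat \<Rightarrow> real) \<Rightarrow> nat \<Rightarrow> nat \<Rightarrow> real" where
  "mmul V A B = (\<lambda>i j. \<Sum>k\<in>V. A i k * B k j)"

definition is_pinv :: "nat set \<Rightarrow> (nat \<Rightarrow> nat \<Rightarrow> real) \<Rightarrow> (nat \<Rightarrow> nat \<Rightarrow> real) \<Rightarrow> bool" where
  "is_pinv V L X \<longleftrightarrow>
     (\<forall>i j. (i \<notin> V \<or> j \<notin> V) \<longrightarrow> X i j = 0) \<and>
     (\<forall>i\<in>V. \<forall>j\<in>V.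
        mmul V (mmul V L X) L i j = L i j \<and>
        mmul V (mmul V X L) X i j = X i j \<and>
        mmul V L X i j = mmul V L X j i \<and>
        mmul V X L i j = mmul V X L j i)"

definition pinv :: "nat set \<Rightarrow> (nat \<Rightarrow> nat \<Rightarrow> real) \<Rightarrow> nat \<Rightarrow> nat \<Rightarrow> real" where
  "pinv V L = (THE X. is_pinv V L X)"

text \<open>Simple graph given by vertex set V and symmetric irreflexive adjacency relation.\<close>
definition gdeg :: "nat set \<Rightarrow> (nat \<Rightarrow> nat \<Rightarrow> bool) \<Rightarrow> nat \<Rightarrow> nat" where
  "gdeg V adj u = card {v \<in> V. adj u v}"

definition laplacian :: "nat set \<Rightarrow> (nat \<Rightarrow> nat \<Rightarrow> bool) \<Rightarrow> nat \<Rightarrow> nat \<Rightarrow> real" where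
  "laplacian V adj = (\<lambda>u v. if u \<in> V \<and> v \<in> V then
      (if u = v then real (gdeg V adj u) else 0) - (if adj u v then 1 else 0) else 0)"

definition eff_res :: "nat set \<Rightarrow> (nat \<Rightarrow> nat \<Rightarrow> bool) \<Rightarrow> nat \<Rightarrow> nat \<Rightarrow> real" where
  "eff_res V adj s t =
     (let b = (\<lambda>u. (if u = s then 1 else 0) - (if u = t then 1 else 0) :: real);
          P = pinv V (laplacian V adj)
      in \<Sum>u\<in>V. \<Sum>v\<in>V. b u * P u v * b v)"

definition norm_laplacian :: "nat set \<Rightarrow> (nat \<Rightarrow> nat \<Rightarrow> bool) \<Rightarrow> nat \<Rightarrow> nat \<Rightarrow> real" where
  "norm_laplacian V adj = (\<lambda>u v.
      (if u = v \<and> gdeg V adj u > 0 then 1 else 0)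
      - (if adj u v then 1 / sqrt (real (gdeg V adj u) * real (gdeg V adj v)) else 0))"

text \<open>Spectral gap = second smallest eigenvalue lambda_2 of the normalized Laplacian,
  via the Courant--Fischer formula (the smallest eigenvalue 0 has eigenvector D^(1/2) 1).\<close>
definition spectral_gap :: "nat set \<Rightarrow> (nat \<Rightarrow> nat \<Rightarrow> bool) \<Rightarrow> real" where
  "spectral_gap V adj = Inf
     {(\<Sum>u\<in>V. \<Sum>v\<in>V. f u * norm_laplacian V adj u v * f v) / (\<Sum>u\<in>V. (f u)^2) | f.
        (\<exists>u\<in>V. f u \<noteq> 0) \<and> (\<Sum>u\<in>V. sqrt (real (gdeg V adj u)) * f u) = 0}"

definition constr_adj :: "nat set \<Rightarrow> nat set \<Rightarrow> (nat \<Rightarrow> nat \<Rightarrow> bool) \<Rightarrow> nat \<Rightarrow> nat \<Rightarrow>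
    nat set \<Rightarrow> nat set \<Rightarrow> nat \<Rightarrow> nat \<Rightarrow> bool" where
  "constr_adj S1 S2 E s t N1 N2 = (\<lambda>u v.
      (u \<in> S1 \<and> v \<in> S1 \<and> E u v)
    \<or> (u = s \<and> v \<in> N1 \<union> N2) \<or> (v = s \<and> u \<in> N1 \<union> N2)
    \<or> (u = t \<and> v \<in> S1 \<union> S2) \<or> (v = t \<and> u \<in> S1 \<union> S2))"

end

(*
  For a connected graph with Laplacian L and Dirichlet form D, the potential
  phi = L^+ (e_s - e_t) satisfies psi(s) - psi(t) = D(psi, phi) for every psi, and
  r(s, t) = phi(s) - phi(t) = D(phi, phi).  Hence K r <= 1 as soon as
  D(x, x) >= K (x(s) - x(t))^2 for all x, and (psi(s) - psi(t))^2 <= D(psi, psi) r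
  for every psi by Cauchy-Schwarz.

  In G1 all d_s neighbours of s lie in the expander S1.  A potential x with drop
  a = x(s) - x(t) either pays on the edges at s, or keeps the mass
  sum_{w in N1} (x(w) - x(t))^2, which the spectral gap (d gamma >= 20/eps) and the
  size of S1 (n1 >= 2 d^3) make c = 10/eps times as expensive on the edges to t and
  inside S1.  So D(x, x) >= d_s c/(1 + c) a^2, i.e. r1 <= (1 + eps/10)/d_s.
  In G2 the potential that is 1 at s, 1/2 on N2 and 0 elsewhere has energy
  d_s (1 - eps/2), so r2 >= 1/(d_s (1 - eps/2)) > (1 + eps/4) r1.
*)

theory Submission
  imports Defs "Jordan_Normal_Form.Determinant" "HOL-Analysis.Convex"
begin

section \<open>Inverting matrices over a finite index set\<close>

text \<open>Jordan_Normal_Form matrices are indexed by an initial segment {..<n}; extending M by the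
  identity outside V preserves invertibility.\<close>

definition embed_mat :: "nat \<Rightarrow> nat set \<Rightarrow> (nat \<Rightarrow> nat \<Rightarrow> real) \<Rightarrow> real mat" where
  "embed_mat n V M = mat n n (\<lambda>(i, j). if i \<in> V \<and> j \<in> V then M i j else of_bool (i = j))"

lemma embed_mat_row_sum:
  assumes "V \<subseteq> {..<n}" "i \<in> V"
  shows "(\<Sum>k<n. embed_mat n V M $$ (i, k) * f k) = (\<Sum>k\<in>V. M i k * f k)"
proof -
  have "(\<Sum>k<n. embed_mat n V M $$ (i, k) * f k) = (\<Sum>k<n. if k \<in> V then M i k * f k else 0)"
    using assms by (intro sum.cong) (auto simp: embed_mat_def)
  also have "\<dots> = (\<Sum>k\<in>V. M i k * f k)"
    using assms(1) by (simp add: sum.inter_restrict[symmetric] Int_absorb1)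
  finally show ?thesis .
qed

lemma embed_mat_col_sum:
  assumes "V \<subseteq> {..<n}" "j \<in> V"
  shows "(\<Sum>k<n. f k * embed_mat n V M $$ (k, j)) = (\<Sum>k\<in>V. f k * M k j)"
proof -
  have "(\<Sum>k<n. f k * embed_mat n V M $$ (k, j)) = (\<Sum>k<n. if k \<in> V then f k * M k j else 0)"
    using assms by (intro sum.cong) (auto simp: embed_mat_def)
  also have "\<dots> = (\<Sum>k\<in>V. f k * M k j)"
    using assms(1) by (simp add: sum.inter_restrict[symmetric] Int_absorb1)
  finally show ?thesis .
qed

lemma det_embed_mat_nonzero:
  assumes V: "V \<subseteq> {..<n}"
    and ker: "\<And>x. \<forall>u\<in>V. (\<Sum>w\<in>V. M u w * x w) = 0 \<Longrightarrow> \<forall>u\<in>V. x u = 0"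
  shows "det (embed_mat n V M) \<noteq> 0"
proof
  let ?A = "embed_mat n V M"
  assume "det ?A = 0"
  then obtain v where v: "v \<in> carrier_vec n" "v \<noteq> 0\<^sub>v n" "?A *\<^sub>v v = 0\<^sub>v n"
    using det_0_iff_vec_prod_zero[of ?A n] by (auto simp: embed_mat_def)
  have Av: "(\<Sum>k<n. ?A $$ (i, k) * v $ k) = 0" if "i < n" for i
    using that v(1) arg_cong[OF v(3), of "\<lambda>w. w $ i"]
    by (simp add: embed_mat_def scalar_prod_def lessThan_atLeast0)
  have off_V: "v $ i = 0" if "i < n" "i \<notin> V" for i
    using Av[OF that(1)] that
    by (simp add: embed_mat_def if_distrib[of "\<lambda>a. a * _"] sum.If_cases lessThan_atLeast0 cong: if_cong)
  have "\<forall>u\<in>V. (\<Sum>w\<in>V. M u w * v $ w) = 0"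
    using Av V by (auto simp: embed_mat_row_sum[of V n, symmetric])
  then have "\<forall>u\<in>V. v $ u = 0"
    by (rule ker)
  then have "v = 0\<^sub>v n"
    using v(1) off_V by (intro eq_vecI) auto
  with v(2) show False ..
qed

lemma exists_mmul_inverse:
  fixes M :: "nat \<Rightarrow> nat \<Rightarrow> real"
  assumes "finite V"
    and ker: "\<And>x. \<forall>u\<in>V. (\<Sum>w\<in>V. M u w * x w) = 0 \<Longrightarrow> \<forall>u\<in>V. x u = 0"
  obtains B where "\<forall>u\<in>V. \<forall>v\<in>V. mmul V M B u v = of_bool (u = v)"
    and "\<forall>u\<in>V. \<forall>v\<in>V. mmul V B M u v = of_bool (u = v)"
proof -
  define n where "n = Suc (Max (insert 0 V))"
  have V: "V \<subseteq> {..<n}"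
    using assms(1) by (auto simp: n_def less_Suc_eq_le)
  define A where "A = embed_mat n V M"
  have A: "A \<in> carrier_mat n n"
    by (simp add: A_def embed_mat_def)
  have "det A \<noteq> 0"
    unfolding A_def using V ker by (rule det_embed_mat_nonzero)
  then obtain B where B: "B \<in> carrier_mat n n" "B * A = 1\<^sub>m n" "A * B = 1\<^sub>m n"
    using det_non_zero_imp_unit[OF A]
    unfolding Units_def by (auto simp: ring_mat_simps)
  have entry: "(C * D) $$ (i, j) = (\<Sum>k<n. C $$ (i, k) * D $$ (k, j))"
    if "C \<in> carrier_mat n n" "D \<in> carrier_mat n n" "i < n" "j < n" for C D i j
    using that by (simp add: scalar_prod_def lessThan_atLeast0)
  have AB: "(\<Sum>k<n. A $$ (i, k) * B $$ (k, j)) = of_bool (i = j)"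
    and BA: "(\<Sum>k<n. B $$ (i, k) * A $$ (k, j)) = of_bool (i = j)" if "i < n" "j < n" for i j
    using that by (simp_all add: entry[OF A B(1) that, symmetric] entry[OF B(1) A that, symmetric] B)
  show thesis
  proof
    show "\<forall>u\<in>V. \<forall>v\<in>V. mmul V M (\<lambda>i j. B $$ (i, j)) u v = of_bool (u = v)"
    proof (intro ballI)
      fix u v assume uv: "u \<in> V" "v \<in> V"
      then show "mmul V M (\<lambda>i j. B $$ (i, j)) u v = of_bool (u = v)"
        using AB[of u v] embed_mat_row_sum[OF V uv(1), of M "\<lambda>k. B $$ (k, v)"] V
        by (auto simp: mmul_def A_def subset_iff)
    qed
    show "\<forall>u\<in>V. \<forall>v\<in>V. mmul V (\<lambda>i j. B $$ (i, j)) M u v = of_bool (u = v)"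
    proof (intro ballI)
      fix u v assume uv: "u \<in> V" "v \<in> V"
      then show "mmul V (\<lambda>i j. B $$ (i, j)) M u v = of_bool (u = v)"
        using BA[of u v] embed_mat_col_sum[OF V uv(2), of "\<lambda>k. B $$ (u, k)" M] V
        by (auto simp: mmul_def A_def subset_iff)
    qed
  qed
qed

section \<open>The Moore-Penrose pseudo-inverse\<close>

definition mtrans :: "(nat \<Rightarrow> nat \<Rightarrow> real) \<Rightarrow> nat \<Rightarrow> nat \<Rightarrow> real" where
  "mtrans A = (\<lambda>i j. A j i)"

definition mrestrict :: "nat set \<Rightarrow> (nat \<Rightarrow> nat \<Rightarrow> real) \<Rightarrow> nat \<Rightarrow> nat \<Rightarrow> real" where
  "mrestrict V A = (\<lambda>i j. if i \<in> V \<and> j \<in> V then A i j else 0)"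

text \<open>After restriction to V the pointwise conditions of is_pinv become equations
  between functions, for which the usual algebraic uniqueness proof applies.\<close>

definition penrose :: "nat set \<Rightarrow> (nat \<Rightarrow> nat \<Rightarrow> real) \<Rightarrow> (nat \<Rightarrow> nat \<Rightarrow> real) \<Rightarrow> bool" where
  "penrose V A X \<longleftrightarrow>
     mmul V (mmul V A X) A = A \<and> mmul V (mmul V X A) X = X \<and>
     mtrans (mmul V A X) = mmul V A X \<and> mtrans (mmul V X A) = mmul V X A"

lemma mmul_assoc: "mmul V (mmul V A B) C = mmul V A (mmul V B C)"
proof (intro ext)
  fix i j
  have "mmul V (mmul V A B) C i j = (\<Sum>k\<in>V. \<Sum>l\<in>V. A i l * B l k * C k j)"
    unfolding mmul_def by (simp add: sum_distrib_right)
  also have "\<dots> = (\<Sum>l\<in>V. \<Sum>k\<in>V. A i l * B l k * C k j)"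
    by (rule sum.swap)
  also have "\<dots> = mmul V A (mmul V B C) i j"
    unfolding mmul_def by (simp add: sum_distrib_left mult.assoc)
  finally show "mmul V (mmul V A B) C i j = mmul V A (mmul V B C) i j" .
qed

lemma mtrans_mmul: "mtrans (mmul V A B) = mmul V (mtrans B) (mtrans A)"
  by (simp add: mtrans_def mmul_def mult.commute)

lemma mtrans_mrestrict: "mtrans (mrestrict V A) = mrestrict V (mtrans A)"
  by (auto simp: mtrans_def mrestrict_def fun_eq_iff)

lemma mrestrict_mmul: "mrestrict V (mmul V A B) = mmul V (mrestrict V A) (mrestrict V B)"
  by (auto simp: mrestrict_def mmul_def intro!: ext sum.cong)

lemma mrestrict_eq_iff: "mrestrict V A = mrestrict V B \<longleftrightarrow> (\<forall>i\<in>V. \<forall>j\<in>V. A i j = B i j)"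
  by (auto simp: mrestrict_def fun_eq_iff)

lemma is_pinv_imp_penrose:
  assumes "is_pinv V L X"
  shows "penrose V (mrestrict V L) X"
proof -
  have X: "mrestrict V X = X"
    using assms by (auto simp: is_pinv_def mrestrict_def fun_eq_iff)
  have on_V: "mrestrict V (mmul V (mmul V L X) L) = mrestrict V L"
    "mrestrict V (mmul V (mmul V X L) X) = mrestrict V X"
    "mrestrict V (mtrans (mmul V L X)) = mrestrict V (mmul V L X)"
    "mrestrict V (mtrans (mmul V X L)) = mrestrict V (mmul V X L)"
    using assms unfolding is_pinv_def mrestrict_eq_iff by (auto simp: mtrans_def)
  show ?thesis
    using on_V unfolding penrose_def mrestrict_mmul mtrans_mrestrict[symmetric] X by simp
qed

lemma penrose_mtrans_right:
  assumes "penrose V A Y"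
  shows "mtrans A = mmul V (mtrans A) (mmul V A Y)"
proof -
  have "mtrans A = mtrans (mmul V (mmul V A Y) A)"
    using assms by (simp add: penrose_def)
  also have "\<dots> = mmul V (mtrans A) (mtrans (mmul V A Y))"
    by (rule mtrans_mmul)
  also have "\<dots> = mmul V (mtrans A) (mmul V A Y)"
    using assms by (simp add: penrose_def)
  finally show ?thesis .
qed

lemma penrose_mtrans_left:
  assumes "penrose V A X"
  shows "mtrans A = mmul V (mmul V X A) (mtrans A)"
proof -
  have "mtrans A = mtrans (mmul V A (mmul V X A))"
    using assms by (simp add: penrose_def flip: mmul_assoc)
  also have "\<dots> = mmul V (mtrans (mmul V X A)) (mtrans A)"
    by (rule mtrans_mmul)
  also have "\<dots> = mmul V (mmul V X A) (mtrans A)"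
    using assms by (simp add: penrose_def)
  finally show ?thesis .
qed

lemma penrose_unique:
  assumes X: "penrose V A X" and Y: "penrose V A Y"
  shows "X = Y"
proof -
  have AX: "mtrans (mmul V A X) = mmul V A X" and YA: "mtrans (mmul V Y A) = mmul V Y A"
    and XAX: "mmul V (mmul V X A) X = X" and YAY: "mmul V (mmul V Y A) Y = Y"
    using X Y by (simp_all add: penrose_def)
  have AX_t: "mtrans (mmul V A X) = mmul V (mtrans (mmul V A X)) (mmul V A Y)"
    by (subst (1 2) mtrans_mmul, subst (1) penrose_mtrans_right[OF Y]) (simp only: mmul_assoc)
  have YA_t: "mtrans (mmul V Y A) = mmul V (mmul V X A) (mtrans (mmul V Y A))"
    by (subst (1 2) mtrans_mmul, subst (1) penrose_mtrans_left[OF X]) (simp only: mmul_assoc)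
  have "X = mmul V X (mtrans (mmul V A X))"
    by (simp only: AX mmul_assoc[symmetric] XAX)
  also have "\<dots> = mmul V X (mmul V (mtrans (mmul V A X)) (mmul V A Y))"
    by (rule arg_cong[where f = "mmul V X", OF AX_t])
  also have "\<dots> = mmul V (mmul V (mmul V X A) X) (mmul V A Y)"
    by (simp only: AX mmul_assoc)
  also have "\<dots> = mmul V (mmul V X A) Y"
    by (subst XAX) (simp only: mmul_assoc)
  also have "\<dots> = mmul V (mmul V X A) (mmul V (mtrans (mmul V Y A)) Y)"
    by (simp only: YA YAY)
  also have "\<dots> = mmul V (mtrans (mmul V Y A)) Y"
    by (simp only: mmul_assoc[symmetric] YA_t[symmetric])
  also have "\<dots> = Y"
    by (simp only: YA YAY)
  finally show ?thesis .
qed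

lemma pinv_eqI:
  assumes "is_pinv V L X"
  shows "pinv V L = X"
  unfolding pinv_def
proof (rule the_equality)
  show "is_pinv V L X" by fact
  show "Y = X" if "is_pinv V L Y" for Y
    using penrose_unique is_pinv_imp_penrose that assms by blast
qed

lemma sum_centering:
  fixes f :: "nat \<Rightarrow> real"
  assumes "finite V" and "i \<in> V"
  shows "(\<Sum>k\<in>V. (of_bool (i = k) - c) * f k) = f i - c * (\<Sum>k\<in>V. f k)"
  using assms by (simp add: left_diff_distrib sum_subtractf sum_distrib_left)

lemma col_sum_of_right_inverse:
  assumes "finite V" "v \<in> V"
    and MB: "\<forall>u\<in>V. \<forall>v\<in>V. mmul V M B u v = of_bool (u = v)"
    and M_col: "\<And>w. w \<in> V \<Longrightarrow> (\<Sum>u\<in>V. M u w) = 1"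
  shows "(\<Sum>w\<in>V. B w v) = 1"
proof -
  have "1 = (\<Sum>u\<in>V. mmul V M B u v)"
    using assms(1,2) MB by simp
  also have "\<dots> = (\<Sum>w\<in>V. (\<Sum>u\<in>V. M u w) * B w v)"
    unfolding mmul_def by (subst sum.swap) (simp add: sum_distrib_right)
  finally show ?thesis
    using M_col by simp
qed

lemma row_sum_of_left_inverse:
  assumes "finite V" "u \<in> V"
    and BM: "\<forall>u\<in>V. \<forall>v\<in>V. mmul V B M u v = of_bool (u = v)"
    and M_row: "\<And>w. w \<in> V \<Longrightarrow> (\<Sum>v\<in>V. M w v) = 1"
  shows "(\<Sum>w\<in>V. B u w) = 1"
proof -
  have "1 = (\<Sum>v\<in>V. mmul V B M u v)"
    using assms(1,2) BM by simp
  also have "\<dots> = (\<Sum>w\<in>V. B u w * (\<Sum>v\<in>V. M w v))"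
    unfolding mmul_def by (subst sum.swap) (simp add: sum_distrib_left)
  finally show ?thesis
    using M_row by simp
qed

lemma is_pinv_of_shifted_inverse:
  fixes V :: "nat set" and L B :: "nat \<Rightarrow> nat \<Rightarrow> real"
  assumes fin: "finite V"
    and row: "\<And>i. i \<in> V \<Longrightarrow> (\<Sum>j\<in>V. L i j) = 0"
    and col: "\<And>j. j \<in> V \<Longrightarrow> (\<Sum>i\<in>V. L i j) = 0"
    and MB: "\<forall>u\<in>V. \<forall>v\<in>V. mmul V (\<lambda>i j. L i j + 1 / card V) B u v = of_bool (u = v)"
    and BM: "\<forall>u\<in>V. \<forall>v\<in>V. mmul V B (\<lambda>i j. L i j + 1 / card V) u v = of_bool (u = v)"
  shows "is_pinv V L (mrestrict V (\<lambda>i j. B i j - 1 / card V))"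
    and "\<And>u v. u \<in> V \<Longrightarrow> v \<in> V \<Longrightarrow>
      mmul V L (mrestrict V (\<lambda>i j. B i j - 1 / card V)) u v = of_bool (u = v) - 1 / card V"
proof -
  define c where "c = 1 / real (card V)"
  define X where "X = mrestrict V (\<lambda>i j. B i j - c)"
  note MB = MB[folded c_def] and BM = BM[folded c_def]
  have nc: "real (card V) * c = 1" if "v \<in> V" for v
    using fin that by (auto simp: c_def)
  have B_col: "(\<Sum>w\<in>V. B w v) = 1" if "v \<in> V" for v
    using fin that MB by (rule col_sum_of_right_inverse) (simp add: sum.distrib col nc)
  have B_row: "(\<Sum>w\<in>V. B u w) = 1" if "u \<in> V" for u
    using fin that BM by (rule row_sum_of_left_inverse) (simp add: sum.distrib row nc)
  have LX: "mmul V L X u v = of_bool (u = v) - c" if "u \<in> V" "v \<in> V" for u v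
  proof -
    have "mmul V L X u v = mmul V (\<lambda>i j. L i j + c) B u v - c * (\<Sum>w\<in>V. B w v) - c * (\<Sum>w\<in>V. L u w)"
      using that unfolding mmul_def X_def mrestrict_def
      by (simp add: algebra_simps sum.distrib sum_subtractf sum_distrib_left)
    then show ?thesis using that MB B_col row by simp
  qed
  have XL: "mmul V X L u v = of_bool (u = v) - c" if "u \<in> V" "v \<in> V" for u v
  proof -
    have "mmul V X L u v = mmul V B (\<lambda>i j. L i j + c) u v - c * (\<Sum>w\<in>V. B u w) - c * (\<Sum>w\<in>V. L w v)"
      using that unfolding mmul_def X_def mrestrict_def
      by (simp add: algebra_simps sum.distrib sum_subtractf sum_distrib_left)
    then show ?thesis using that BM B_row col by simp
  qed
  have X_col: "(\<Sum>w\<in>V. X w v) = 0" if "v \<in> V" for v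
    using that fin B_col nc[OF that] by (simp add: X_def mrestrict_def sum_subtractf)
  show "is_pinv V L (mrestrict V (\<lambda>i j. B i j - 1 / card V))"
    unfolding is_pinv_def X_def[unfolded c_def, symmetric]
  proof (intro conjI allI impI ballI)
    fix i j assume "i \<in> V" "j \<in> V"
    then show "mmul V (mmul V L X) L i j = L i j" "mmul V (mmul V X L) X i j = X i j"
      "mmul V L X i j = mmul V L X j i" "mmul V X L i j = mmul V X L j i"
      using fin col X_col by (simp_all add: mmul_def[of V "mmul V _ _"] LX XL sum_centering)
  qed (auto simp: X_def mrestrict_def)
  show "mmul V L (mrestrict V (\<lambda>i j. B i j - 1 / card V)) u v = of_bool (u = v) - 1 / card V"
    if "u \<in> V" "v \<in> V" for u v
    using LX[OF that] unfolding X_def c_def .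
qed

lemma trivial_kernel_add_const:
  fixes V :: "nat set" and L :: "nat \<Rightarrow> nat \<Rightarrow> real"
  assumes fin: "finite V"
    and col: "\<And>j. j \<in> V \<Longrightarrow> (\<Sum>i\<in>V. L i j) = 0"
    and ker: "\<And>x. \<forall>u\<in>V. (\<Sum>w\<in>V. L u w * x w) = 0 \<Longrightarrow> \<forall>u\<in>V. \<forall>v\<in>V. x u = x v"
    and Mx: "\<forall>u\<in>V. (\<Sum>w\<in>V. (L u w + 1 / card V) * x w) = 0"
  shows "\<forall>u\<in>V. x u = 0"
proof -
  have "0 = (\<Sum>u\<in>V. \<Sum>w\<in>V. (L u w + 1 / card V) * x w)"
    using Mx by simp
  also have "\<dots> = (\<Sum>w\<in>V. ((\<Sum>u\<in>V. L u w) + real (card V) / card V) * x w)"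
    by (subst sum.swap) (simp add: sum.distrib flip: sum_distrib_right)
  also have "\<dots> = (\<Sum>w\<in>V. x w)"
    using col fin by (intro sum.cong) auto
  finally have sum_x: "(\<Sum>w\<in>V. x w) = 0" ..
  have "(\<Sum>w\<in>V. (L u w + 1 / card V) * x w) = (\<Sum>w\<in>V. L u w * x w) + (\<Sum>w\<in>V. x w) / card V" for u
    by (simp add: distrib_right sum.distrib sum_divide_distrib)
  then have "\<forall>u\<in>V. (\<Sum>w\<in>V. L u w * x w) = 0"
    using Mx sum_x by simp
  then have const: "\<forall>u\<in>V. \<forall>w\<in>V. x u = x w"
    by (rule ker)
  have "real (card V) * x u = 0" if "u \<in> V" for u
  proof -
    have "(\<Sum>w\<in>V. x w) = (\<Sum>w\<in>V. x u)"
      using const that by (intro sum.cong refl) blast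
    then show ?thesis using sum_x by simp
  qed
  then show ?thesis
    using fin by (auto simp: card_gt_0_iff)
qed

lemma mmul_pinv_of_constant_kernel:
  fixes V :: "nat set" and L :: "nat \<Rightarrow> nat \<Rightarrow> real"
  assumes fin: "finite V"
    and sym: "\<And>i j. i \<in> V \<Longrightarrow> j \<in> V \<Longrightarrow> L i j = L j i"
    and row: "\<And>i. i \<in> V \<Longrightarrow> (\<Sum>j\<in>V. L i j) = 0"
    and ker: "\<And>x. \<forall>u\<in>V. (\<Sum>w\<in>V. L u w * x w) = 0 \<Longrightarrow> \<forall>u\<in>V. \<forall>v\<in>V. x u = x v"
    and u: "u \<in> V" and v: "v \<in> V"
  shows "mmul V L (pinv V L) u v = of_bool (u = v) - 1 / real (card V)"
proof -
  have col: "(\<Sum>i\<in>V. L i j) = 0" if "j \<in> V" for j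
  proof -
    have "(\<Sum>i\<in>V. L i j) = (\<Sum>i\<in>V. L j i)"
      using sym that by (intro sum.cong) auto
    then show ?thesis using row[OF that] by simp
  qed
  \<comment> \<open>L + J/n is invertible: J/n is the identity on the constants, which span the kernel of L.\<close>
  have "\<forall>u\<in>V. x u = 0" if "\<forall>u\<in>V. (\<Sum>w\<in>V. (L u w + 1 / card V) * x w) = 0" for x
    using fin col ker that by (rule trivial_kernel_add_const)
  then obtain B where B: "\<forall>u\<in>V. \<forall>v\<in>V. mmul V (\<lambda>i j. L i j + 1 / card V) B u v = of_bool (u = v)"
    "\<forall>u\<in>V. \<forall>v\<in>V. mmul V B (\<lambda>i j. L i j + 1 / card V) u v = of_bool (u = v)"
    by (rule exists_mmul_inverse[OF fin, of "\<lambda>i j. L i j + 1 / card V"]) auto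
  have "is_pinv V L (mrestrict V (\<lambda>i j. B i j - 1 / card V))"
    using fin row col B by (rule is_pinv_of_shifted_inverse(1))
  moreover have "mmul V L (mrestrict V (\<lambda>i j. B i j - 1 / card V)) u v = of_bool (u = v) - 1 / card V"
    using fin row col B u v by (rule is_pinv_of_shifted_inverse(2))
  ultimately show ?thesis
    by (simp add: pinv_eqI)
qed

section \<open>Dirichlet form and effective resistance\<close>

definition dirichlet_form :: "nat set \<Rightarrow> (nat \<Rightarrow> nat \<Rightarrow> bool) \<Rightarrow> (nat \<Rightarrow> real) \<Rightarrow> (nat \<Rightarrow> real) \<Rightarrow> real" where
  "dirichlet_form V adj x y = (\<Sum>u\<in>V. \<Sum>v\<in>V. if adj u v then (x u - x v) * (y u - y v) else 0) / 2"

lemma dirichlet_form_edge_sum: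
  assumes "finite V"
  shows "dirichlet_form V adj x y =
    (\<Sum>p\<in>{p \<in> V \<times> V. adj (fst p) (snd p)}. (x (fst p) - x (snd p)) * (y (fst p) - y (snd p))) / 2"
  using assms by (simp add: dirichlet_form_def sum.cartesian_product sum.inter_filter case_prod_beta)

lemma dirichlet_form_nonneg: "0 \<le> dirichlet_form V adj x x"
  unfolding dirichlet_form_def by (auto intro!: sum_nonneg)

lemma dirichlet_form_Cauchy_Schwarz:
  assumes "finite V"
  shows "(dirichlet_form V adj x y)\<^sup>2 \<le> dirichlet_form V adj x x * dirichlet_form V adj y y"
proof -
  define P where "P = {p \<in> V \<times> V. adj (fst p) (snd p)}"
  define a where "a p = x (fst p) - x (snd p)" for p
  define b where "b p = y (fst p) - y (snd p)" for p
  have "(dirichlet_form V adj x y)\<^sup>2 = (\<Sum>p\<in>P. a p * b p)\<^sup>2 / 4"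
    using assms by (simp add: dirichlet_form_edge_sum P_def a_def b_def power_divide)
  also have "\<dots> \<le> (\<Sum>p\<in>P. (a p)\<^sup>2) * (\<Sum>p\<in>P. (b p)\<^sup>2) / 4"
    by (simp add: Cauchy_Schwarz_ineq_sum)
  also have "\<dots> = dirichlet_form V adj x x * dirichlet_form V adj y y"
    using assms by (simp add: dirichlet_form_edge_sum P_def a_def b_def power2_eq_square)
  finally show ?thesis .
qed

lemma dirichlet_form_diff_const:
  "dirichlet_form V adj (\<lambda>u. x u - a) (\<lambda>u. y u - b) = dirichlet_form V adj x y"
  unfolding dirichlet_form_def by (intro arg_cong[where f = "\<lambda>z. z / 2"] sum.cong refl) simp

lemma dirichlet_form_cong:
  assumes "\<And>u v. u \<in> V \<Longrightarrow> v \<in> V \<Longrightarrow> adj u v \<longleftrightarrow> adj' u v"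
  shows "dirichlet_form V adj x y = dirichlet_form V adj' x y"
  using assms by (simp add: dirichlet_form_def)

lemma dirichlet_form_superset:
  assumes "finite W" "V \<subseteq> W" and "\<And>u v. adj u v \<Longrightarrow> u \<in> V \<and> v \<in> V"
  shows "dirichlet_form W adj x y = dirichlet_form V adj x y"
proof -
  define f where "f u v = (if adj u v then (x u - x v) * (y u - y v) else 0)" for u v
  have "(\<Sum>u\<in>W. \<Sum>v\<in>W. f u v) = (\<Sum>u\<in>W. \<Sum>v\<in>V. f u v)"
    using assms by (intro sum.cong refl sum.mono_neutral_right) (auto simp: f_def)
  also have "\<dots> = (\<Sum>u\<in>V. \<Sum>v\<in>V. f u v)"
    using assms by (intro sum.mono_neutral_right) (auto simp: f_def intro!: sum.neutral)
  finally show ?thesis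
    by (simp add: dirichlet_form_def f_def)
qed

lemma dirichlet_form_insert:
  assumes "finite V" "a \<notin> V" and "\<not> adj a a" and "\<And>w. adj w a \<longleftrightarrow> adj a w"
  shows "dirichlet_form (insert a V) adj x x = dirichlet_form V adj x x + (\<Sum>w | w \<in> V \<and> adj a w. (x a - x w)\<^sup>2)"
proof -
  define f where "f u v = (if adj u v then (x u - x v) * (x u - x v) else 0)" for u v
  have "(\<Sum>w | w \<in> V \<and> adj a w. (x a - x w)\<^sup>2) = (\<Sum>w\<in>V. f a w)"
    using assms(1) by (simp add: f_def sum.inter_filter[symmetric] power2_eq_square)
  moreover have "(\<Sum>u\<in>V. f u a) = (\<Sum>w\<in>V. f a w)"
    using assms(4) by (intro sum.cong) (simp_all add: f_def algebra_simps)
  moreover have "(\<Sum>u\<in>insert a V. \<Sum>v\<in>insert a V. f u v)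
      = f a a + (\<Sum>w\<in>V. f a w) + (\<Sum>u\<in>V. f u a) + (\<Sum>u\<in>V. \<Sum>v\<in>V. f u v)"
    using assms(1,2) by (simp add: sum.distrib)
  moreover have "f a a = 0"
    using assms(3) by (simp add: f_def)
  ultimately have "(\<Sum>u\<in>insert a V. \<Sum>v\<in>insert a V. f u v)
      = (\<Sum>u\<in>V. \<Sum>v\<in>V. f u v) + 2 * (\<Sum>w | w \<in> V \<and> adj a w. (x a - x w)\<^sup>2)"
    by simp
  then show ?thesis
    by (simp add: dirichlet_form_def f_def)
qed

text \<open>Connectedness is stated in the form in which it is used: every function that is constant
  along the edges is constant.\<close>

locale connected_graph =
  fixes V :: "nat set" and adj :: "nat \<Rightarrow> nat \<Rightarrow> bool"
  assumes finite_vertices: "finite V"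
    and adj_sym: "adj u v \<Longrightarrow> adj v u"
    and adj_irrefl: "\<not> adj u u"
    and connected: "(\<And>u v. u \<in> V \<Longrightarrow> v \<in> V \<Longrightarrow> adj u v \<Longrightarrow> x u = x v) \<Longrightarrow>
      u \<in> V \<Longrightarrow> v \<in> V \<Longrightarrow> (x :: nat \<Rightarrow> real) u = x v"
begin

lemma laplacian_apply:
  assumes "u \<in> V"
  shows "(\<Sum>v\<in>V. laplacian V adj u v * y v) = (\<Sum>v\<in>V. if adj u v then y u - y v else 0)"
proof -
  have "(\<Sum>v\<in>V. laplacian V adj u v * y v)
      = (\<Sum>v\<in>V. (if v = u then real (gdeg V adj u) * y u else 0) - (if adj u v then y v else 0))"
    using assms adj_irrefl by (intro sum.cong) (auto simp: laplacian_def)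
  also have "\<dots> = real (gdeg V adj u) * y u - (\<Sum>v\<in>V. if adj u v then y v else 0)"
    using finite_vertices assms by (simp add: sum_subtractf)
  also have "real (gdeg V adj u) * y u = (\<Sum>v\<in>V. if adj u v then y u else 0)"
    using finite_vertices by (simp add: gdeg_def sum.inter_filter[symmetric])
  finally show ?thesis
    by (simp add: sum_subtractf[symmetric] if_distrib cong: if_cong)
qed

lemma laplacian_quadratic_form:
  "(\<Sum>u\<in>V. x u * (\<Sum>v\<in>V. laplacian V adj u v * y v)) = dirichlet_form V adj x y"
proof -
  define S where "S = (\<Sum>u\<in>V. \<Sum>v\<in>V. if adj u v then x u * (y u - y v) else 0)"
  have S_eq: "(\<Sum>u\<in>V. x u * (\<Sum>v\<in>V. laplacian V adj u v * y v)) = S"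
    unfolding S_def by (intro sum.cong refl) (auto simp: laplacian_apply sum_distrib_left intro!: sum.cong)
  \<comment> \<open>By symmetry of adj, S is also the same sum with x u replaced by - x v.\<close>
  have S_swap: "S = (\<Sum>u\<in>V. \<Sum>v\<in>V. if adj u v then - (x v * (y u - y v)) else 0)"
    unfolding S_def by (subst sum.swap) (intro sum.cong refl, auto simp: algebra_simps dest: adj_sym)
  have "S + S = 2 * dirichlet_form V adj x y"
    unfolding dirichlet_form_def
    by (subst (2) S_swap) (simp add: S_def flip: sum.distrib, intro sum.cong refl, simp add: algebra_simps)
  then show ?thesis
    using S_eq by simp
qed

lemma laplacian_kernel:
  assumes "\<forall>u\<in>V. (\<Sum>w\<in>V. laplacian V adj u w * x w) = 0" and "u \<in> V" "v \<in> V"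
  shows "x u = x v"
proof (rule connected[OF _ assms(2,3)])
  fix u v assume uv: "u \<in> V" "v \<in> V" "adj u v"
  have "dirichlet_form V adj x x = 0"
    using laplacian_quadratic_form[of x x] assms(1) by simp
  then have "(\<Sum>p\<in>{p \<in> V \<times> V. adj (fst p) (snd p)}. (x (fst p) - x (snd p)) * (x (fst p) - x (snd p))) = 0"
    using finite_vertices by (simp add: dirichlet_form_edge_sum)
  then have "(x u - x v) * (x u - x v) = 0"
    using finite_vertices uv by (subst (asm) sum_nonneg_eq_0_iff) auto
  then show "x u = x v"
    by simp
qed

lemma mmul_laplacian_pinv:
  assumes "u \<in> V" "v \<in> V"
  shows "mmul V (laplacian V adj) (pinv V (laplacian V adj)) u v = of_bool (u = v) - 1 / real (card V)"
proof (rule mmul_pinv_of_constant_kernel[OF finite_vertices _ _ _ assms])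
  show "laplacian V adj i j = laplacian V adj j i" for i j
    by (auto simp: laplacian_def dest: adj_sym)
  show "(\<Sum>j\<in>V. laplacian V adj i j) = 0" if "i \<in> V" for i
    using laplacian_apply[OF that, of "\<lambda>_. 1"] by (simp cong: if_cong)
qed (use laplacian_kernel in blast)

lemma eff_res_potential:
  assumes s: "s \<in> V" and t: "t \<in> V"
  obtains \<phi> where "eff_res V adj s t = dirichlet_form V adj \<phi> \<phi>"
    and "\<And>\<psi>. \<psi> s - \<psi> t = dirichlet_form V adj \<psi> \<phi>"
proof -
  define L where "L = laplacian V adj"
  define P where "P = pinv V L"
  define b where "b u = (if u = s then 1 else 0) - (if u = t then 1 else 0 :: real)" for u
  define \<phi> where "\<phi> w = (\<Sum>v\<in>V. P w v * b v)" for w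
  have sum_b: "(\<Sum>v\<in>V. b v) = 0"
    using finite_vertices s t by (simp add: b_def sum_subtractf)
  have L\<phi>: "(\<Sum>w\<in>V. L u w * \<phi> w) = b u" if u: "u \<in> V" for u
  proof -
    have "(\<Sum>w\<in>V. L u w * \<phi> w) = (\<Sum>v\<in>V. mmul V L P u v * b v)"
      unfolding \<phi>_def mmul_def
      by (simp add: sum_distrib_left sum_distrib_right mult.assoc) (rule sum.swap)
    also have "\<dots> = (\<Sum>v\<in>V. (of_bool (u = v) - 1 / real (card V)) * b v)"
      using u by (intro sum.cong) (simp_all add: L_def P_def mmul_laplacian_pinv)
    also have "\<dots> = b u"
      using finite_vertices u sum_b by (simp add: left_diff_distrib sum_subtractf flip: sum_divide_distrib)
    finally show ?thesis .
  qed
  have energy: "(\<Sum>u\<in>V. \<psi> u * b u) = dirichlet_form V adj \<psi> \<phi>" for \<psi>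
    using laplacian_quadratic_form[of \<psi> \<phi>] L\<phi> by (simp add: L_def)
  have pairing: "(\<Sum>u\<in>V. \<psi> u * b u) = \<psi> s - \<psi> t" for \<psi>
  proof -
    have "(\<Sum>u\<in>V. \<psi> u * b u) = (\<Sum>u\<in>V. (if u = s then \<psi> u else 0) - (if u = t then \<psi> u else 0))"
      by (intro sum.cong) (auto simp: b_def)
    then show ?thesis
      using finite_vertices s t by (simp add: sum_subtractf)
  qed
  have "eff_res V adj s t = (\<Sum>u\<in>V. \<phi> u * b u)"
    unfolding eff_res_def Let_def \<phi>_def P_def L_def[symmetric] b_def[symmetric]
    by (simp add: sum_distrib_left sum_distrib_right mult_ac)
  then show thesis
    using that[of \<phi>] energy pairing by simp
qed

lemma eff_res_le_inverse:
  assumes "s \<in> V" "t \<in> V" and bound: "\<And>x. K * (x s - x t)\<^sup>2 \<le> dirichlet_form V adj x x"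
  shows "K * eff_res V adj s t \<le> 1"
proof -
  obtain \<phi> where r_eq: "eff_res V adj s t = dirichlet_form V adj \<phi> \<phi>"
    and pot: "\<And>\<psi>. \<psi> s - \<psi> t = dirichlet_form V adj \<psi> \<phi>"
    using eff_res_potential[OF assms(1,2)] by blast
  define r where "r = eff_res V adj s t"
  have "K * r\<^sup>2 \<le> r"
    using bound[of \<phi>] pot[of \<phi>] r_eq by (simp add: r_def)
  moreover have "0 \<le> r"
    using r_eq dirichlet_form_nonneg by (simp add: r_def)
  ultimately show ?thesis
    by (cases "r = 0") (auto simp: r_def power2_eq_square mult.assoc[symmetric] mult_le_cancel_right)
qed

lemma eff_res_ge_test_function:
  assumes "s \<in> V" "t \<in> V"
  shows "(\<psi> s - \<psi> t)\<^sup>2 \<le> dirichlet_form V adj \<psi> \<psi> * eff_res V adj s t"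
proof -
  obtain \<phi> where "eff_res V adj s t = dirichlet_form V adj \<phi> \<phi>"
    and "\<And>\<psi>. \<psi> s - \<psi> t = dirichlet_form V adj \<psi> \<phi>"
    using eff_res_potential[OF assms] by blast
  then show ?thesis
    using dirichlet_form_Cauchy_Schwarz[OF finite_vertices, of adj \<psi> \<phi>] by simp
qed

end

section \<open>Regular expanders\<close>

locale regular_expander =
  fixes S :: "nat set" and E :: "nat \<Rightarrow> nat \<Rightarrow> bool" and d :: nat and \<gamma> :: real
  assumes finite_S: "finite S"
    and E_sym: "E u v \<Longrightarrow> E v u"
    and E_irrefl: "\<not> E u u"
    and regular: "u \<in> S \<Longrightarrow> card {v \<in> S. E u v} = d"
    and degree_pos: "0 < d"
    and gap: "\<gamma> \<le> spectral_gap S E"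
begin

lemma sum_neighbours:
  "(\<Sum>u\<in>S. \<Sum>v\<in>S. if E u v then h u else 0) = real d * (\<Sum>u\<in>S. h u)"
    "(\<Sum>u\<in>S. \<Sum>v\<in>S. if E u v then h v else 0) = real d * (\<Sum>u\<in>S. h u)"
proof -
  show first: "(\<Sum>u\<in>S. \<Sum>v\<in>S. if E u v then h u else 0) = real d * (\<Sum>u\<in>S. h u)" for h :: "nat \<Rightarrow> real"
    using finite_S regular by (simp add: sum.inter_filter[symmetric] sum_distrib_left)
  have "(\<Sum>u\<in>S. \<Sum>v\<in>S. if E u v then h v else 0) = (\<Sum>v\<in>S. \<Sum>u\<in>S. if E v u then h v else 0)"
    by (subst sum.swap) (auto intro!: sum.cong dest: E_sym)
  then show "(\<Sum>u\<in>S. \<Sum>v\<in>S. if E u v then h v else 0) = real d * (\<Sum>u\<in>S. h u)"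
    using first by simp
qed

lemma norm_laplacian_quadratic_form:
  "(\<Sum>u\<in>S. \<Sum>v\<in>S. f u * norm_laplacian S E u v * f v) = dirichlet_form S E f f / d"
proof -
  define T where "T = (\<Sum>u\<in>S. \<Sum>v\<in>S. if E u v then f u * f v else 0)"
  have "f u * norm_laplacian S E u v * f v
      = (if u = v then (f u)\<^sup>2 else 0) - (if E u v then f u * f v else 0) / d"
    if "u \<in> S" "v \<in> S" for u v
    using that regular degree_pos E_irrefl by (auto simp: norm_laplacian_def gdeg_def power2_eq_square)
  then have "(\<Sum>u\<in>S. \<Sum>v\<in>S. f u * norm_laplacian S E u v * f v)
      = (\<Sum>u\<in>S. \<Sum>v\<in>S. (if u = v then (f u)\<^sup>2 else 0) - (if E u v then f u * f v else 0) / d)"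
    by (intro sum.cong) auto
  also have "\<dots> = (\<Sum>u\<in>S. (f u)\<^sup>2) - T / d"
    using finite_S by (simp add: T_def sum_subtractf sum_divide_distrib)
  finally have "(\<Sum>u\<in>S. \<Sum>v\<in>S. f u * norm_laplacian S E u v * f v) = (\<Sum>u\<in>S. (f u)\<^sup>2) - T / d" .
  moreover have "2 * dirichlet_form S E f f = 2 * d * (\<Sum>u\<in>S. (f u)\<^sup>2) - 2 * T"
  proof -
    have "2 * dirichlet_form S E f f = (\<Sum>u\<in>S. \<Sum>v\<in>S. if E u v then (f u - f v) * (f u - f v) else 0)"
      by (simp add: dirichlet_form_def)
    also have "\<dots> = (\<Sum>u\<in>S. \<Sum>v\<in>S.
        (if E u v then (f u)\<^sup>2 else 0) + (if E u v then (f v)\<^sup>2 else 0) - 2 * (if E u v then f u * f v else 0))"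
      by (intro sum.cong refl) (simp add: power2_eq_square algebra_simps)
    finally show ?thesis
      by (simp add: sum.distrib sum_subtractf sum_neighbours T_def sum_distrib_left mult.assoc)
  qed
  ultimately show ?thesis
    using degree_pos by (simp add: field_simps)
qed

lemma spectral_gap_bound:
  assumes mean_zero: "(\<Sum>u\<in>S. g u) = 0"
  shows "d * \<gamma> * (\<Sum>u\<in>S. (g u)\<^sup>2) \<le> dirichlet_form S E g g"
proof (cases "\<forall>u\<in>S. g u = 0")
  case True
  then show ?thesis
    by (simp add: dirichlet_form_nonneg)
next
  case False
  define Rayleigh where "Rayleigh f =
    (\<Sum>u\<in>S. \<Sum>v\<in>S. f u * norm_laplacian S E u v * f v) / (\<Sum>u\<in>S. (f u)\<^sup>2)" for f
  have quotients: "spectral_gap S E = Inf {Rayleigh f | f.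
      (\<exists>u\<in>S. f u \<noteq> 0) \<and> (\<Sum>u\<in>S. sqrt (real (gdeg S E u)) * f u) = 0}"
    unfolding spectral_gap_def Rayleigh_def ..
  have Rayleigh_eq: "Rayleigh f = dirichlet_form S E f f / d / (\<Sum>u\<in>S. (f u)\<^sup>2)" for f
    by (simp add: Rayleigh_def norm_laplacian_quadratic_form)
  have "(\<Sum>u\<in>S. sqrt (real (gdeg S E u)) * g u) = sqrt d * (\<Sum>u\<in>S. g u)"
    using regular by (simp add: gdeg_def sum_distrib_left)
  then have "spectral_gap S E \<le> Rayleigh g"
    unfolding quotients using False mean_zero
    by (intro cInf_lower bdd_belowI[of _ 0])
      (auto simp: Rayleigh_eq dirichlet_form_nonneg sum_nonneg)
  moreover have pos: "0 < (\<Sum>u\<in>S. (g u)\<^sup>2)"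
  proof -
    obtain u where "u \<in> S" "g u \<noteq> 0"
      using False by blast
    then show ?thesis
      by (intro sum_pos2[OF finite_S]) auto
  qed
  ultimately have "d * spectral_gap S E * (\<Sum>u\<in>S. (g u)\<^sup>2) \<le> dirichlet_form S E g g"
    using degree_pos by (simp add: Rayleigh_eq field_simps)
  moreover have "d * \<gamma> * (\<Sum>u\<in>S. (g u)\<^sup>2) \<le> d * spectral_gap S E * (\<Sum>u\<in>S. (g u)\<^sup>2)"
    using gap pos by (intro mult_right_mono mult_left_mono) auto
  ultimately show ?thesis
    by linarith
qed

lemma subset_mass_bound:
  fixes c :: real
  assumes N: "N \<subseteq> S" and c: "0 \<le> c" "2 * c * card N \<le> card S" "2 * c \<le> d * \<gamma>"
  shows "c * (\<Sum>u\<in>N. (y u)\<^sup>2) \<le> (\<Sum>u\<in>S. (y u)\<^sup>2) + dirichlet_form S E y y"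
proof -
  define \<mu> where "\<mu> = (\<Sum>u\<in>S. y u) / card S"
  define g where "g u = y u - \<mu>" for u
  have mean_zero: "(\<Sum>u\<in>S. g u) = 0"
    using finite_S by (cases "S = {}") (simp_all add: g_def sum_subtractf \<mu>_def)
  have "(\<Sum>u\<in>S. (y u)\<^sup>2) = (\<Sum>u\<in>S. \<mu>\<^sup>2 + 2 * \<mu> * g u + (g u)\<^sup>2)"
    by (intro sum.cong) (simp_all add: g_def power2_eq_square algebra_simps)
  then have total: "(\<Sum>u\<in>S. (y u)\<^sup>2) = card S * \<mu>\<^sup>2 + (\<Sum>u\<in>S. (g u)\<^sup>2)"
    using mean_zero by (simp add: sum.distrib flip: sum_distrib_left)
  have "(\<Sum>u\<in>N. (y u)\<^sup>2) \<le> (\<Sum>u\<in>N. 2 * \<mu>\<^sup>2 + 2 * (g u)\<^sup>2)"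
  proof (rule sum_mono)
    show "(y u)\<^sup>2 \<le> 2 * \<mu>\<^sup>2 + 2 * (g u)\<^sup>2" for u
      using zero_le_power2[of "\<mu> - g u"] by (simp add: g_def power2_eq_square algebra_simps)
  qed
  also have "\<dots> \<le> 2 * card N * \<mu>\<^sup>2 + 2 * (\<Sum>u\<in>S. (g u)\<^sup>2)"
    using sum_mono2[OF finite_S N, of "\<lambda>u. (g u)\<^sup>2"] by (simp add: sum.distrib flip: sum_distrib_left)
  finally have "c * (\<Sum>u\<in>N. (y u)\<^sup>2) \<le> c * (2 * card N * \<mu>\<^sup>2 + 2 * (\<Sum>u\<in>S. (g u)\<^sup>2))"
    using c(1) by (rule mult_left_mono)
  also have "\<dots> = (2 * c * card N) * \<mu>\<^sup>2 + (2 * c) * (\<Sum>u\<in>S. (g u)\<^sup>2)"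
    by (simp add: algebra_simps)
  also have "\<dots> \<le> card S * \<mu>\<^sup>2 + (d * \<gamma>) * (\<Sum>u\<in>S. (g u)\<^sup>2)"
    using c by (intro add_mono mult_right_mono) (auto simp: sum_nonneg)
  also have "\<dots> \<le> (\<Sum>u\<in>S. (y u)\<^sup>2) + dirichlet_form S E y y"
  proof -
    have "dirichlet_form S E g g = dirichlet_form S E y y"
      unfolding g_def[abs_def] by (rule dirichlet_form_diff_const)
    then show ?thesis
      using total spectral_gap_bound[OF mean_zero] sum_nonneg[of S "\<lambda>u. (g u)\<^sup>2"] by simp
  qed
  finally show ?thesis .
qed

end

section \<open>The lower-bound construction\<close>

lemma sq_diff_add_weighted_sq_ge:
  fixes a z c :: real
  assumes "0 \<le> c"
  shows "c / (1 + c) * a\<^sup>2 \<le> (a - z)\<^sup>2 + c * z\<^sup>2"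
proof -
  have "(1 + c) * ((a - z)\<^sup>2 + c * z\<^sup>2) - c * a\<^sup>2 = ((1 + c) * z - a)\<^sup>2"
    by (simp add: power2_eq_square algebra_simps)
  then have "c * a\<^sup>2 \<le> (1 + c) * ((a - z)\<^sup>2 + c * z\<^sup>2)"
    by (metis diff_ge_0_iff_ge zero_le_power2)
  then show ?thesis
    using assms by (simp add: field_simps)
qed

definition test_potential :: "nat \<Rightarrow> nat set \<Rightarrow> nat \<Rightarrow> real" where
  "test_potential s N w = (if w = s then 1 else if w \<in> N then 1 / 2 else 0)"

locale lower_bound_construction =
  fixes S1 S2 :: "nat set" and E :: "nat \<Rightarrow> nat \<Rightarrow> bool" and s t :: nat
  assumes finite_S1: "finite S1" and finite_S2: "finite S2" and disjoint: "S1 \<inter> S2 = {}"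
    and s_ne_t: "s \<noteq> t" and s_notin: "s \<notin> S1 \<union> S2" and t_notin: "t \<notin> S1 \<union> S2"
    and E_within: "E u v \<Longrightarrow> u \<in> S1 \<and> v \<in> S1"
    and E_sym: "E u v \<Longrightarrow> E v u" and E_irrefl: "\<not> E u u"
begin

lemma connected_graph_constr:
  assumes N: "N1 \<union> N2 \<subseteq> S1 \<union> S2" and N_ne: "N1 \<union> N2 \<noteq> {}"
  shows "connected_graph (S1 \<union> S2 \<union> {s, t}) (constr_adj S1 S2 E s t N1 N2)"
proof
  show "finite (S1 \<union> S2 \<union> {s, t})"
    using finite_S1 finite_S2 by simp
  show "constr_adj S1 S2 E s t N1 N2 u v \<Longrightarrow> constr_adj S1 S2 E s t N1 N2 v u" for u v
    by (auto simp: constr_adj_def dest: E_sym)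
  show "\<not> constr_adj S1 S2 E s t N1 N2 u u" for u
    using N s_notin t_notin E_irrefl by (auto simp: constr_adj_def)
  fix x :: "nat \<Rightarrow> real" and u v
  assume const: "\<And>u v. u \<in> S1 \<union> S2 \<union> {s, t} \<Longrightarrow> v \<in> S1 \<union> S2 \<union> {s, t} \<Longrightarrow>
      constr_adj S1 S2 E s t N1 N2 u v \<Longrightarrow> x u = x v"
    and uv: "u \<in> S1 \<union> S2 \<union> {s, t}" "v \<in> S1 \<union> S2 \<union> {s, t}"
  have to_t: "x w = x t" if "w \<in> S1 \<union> S2" for w
    using const[of w t] that by (simp add: constr_adj_def)
  obtain w where w: "w \<in> N1 \<union> N2"
    using N_ne by blast
  then have "x s = x w"
    using const[of s w] N by (auto simp: constr_adj_def)
  then have "x s = x t"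
    using to_t w N by auto
  then show "x u = x v"
    using uv to_t by auto
qed

lemma dirichlet_form_constr:
  assumes N: "N1 \<union> N2 \<subseteq> S1 \<union> S2"
  shows "dirichlet_form (S1 \<union> S2 \<union> {s, t}) (constr_adj S1 S2 E s t N1 N2) x x
    = (\<Sum>w\<in>N1 \<union> N2. (x s - x w)\<^sup>2) + (\<Sum>w\<in>S1 \<union> S2. (x t - x w)\<^sup>2) + dirichlet_form S1 E x x"
proof -
  define W where "W = S1 \<union> S2"
  define adj where "adj = constr_adj S1 S2 E s t N1 N2"
  have fin: "finite W"
    using finite_S1 finite_S2 by (simp add: W_def)
  have adj_sym: "adj v w \<longleftrightarrow> adj w v" for v w
    by (auto simp: adj_def constr_adj_def dest: E_sym)
  have irrefl: "\<not> adj w w" for w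
    using N s_notin t_notin E_irrefl by (auto simp: adj_def constr_adj_def)
  have "dirichlet_form (insert s (insert t W)) adj x x
      = dirichlet_form (insert t W) adj x x + (\<Sum>w | w \<in> insert t W \<and> adj s w. (x s - x w)\<^sup>2)"
    using fin s_notin s_ne_t by (intro dirichlet_form_insert) (auto simp: W_def adj_sym irrefl)
  also have "{w. w \<in> insert t W \<and> adj s w} = N1 \<union> N2"
    using N s_ne_t s_notin by (auto simp: W_def adj_def constr_adj_def)
  also have "dirichlet_form (insert t W) adj x x
      = dirichlet_form W adj x x + (\<Sum>w | w \<in> W \<and> adj t w. (x t - x w)\<^sup>2)"
    using fin t_notin by (intro dirichlet_form_insert) (auto simp: W_def adj_sym irrefl)
  also have "{w. w \<in> W \<and> adj t w} = W"
    by (auto simp: W_def adj_def constr_adj_def)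
  also have "dirichlet_form W adj x x = dirichlet_form W E x x"
    using s_notin t_notin E_within by (intro dirichlet_form_cong) (auto simp: W_def adj_def constr_adj_def)
  also have "\<dots> = dirichlet_form S1 E x x"
    using fin E_within by (intro dirichlet_form_superset) (auto simp: W_def)
  finally show ?thesis
    by (simp add: W_def adj_def insert_commute)
qed

lemma dirichlet_form_expander_side_ge:
  fixes c \<gamma> :: real
  assumes "regular_expander S1 E d \<gamma>" and N: "N \<subseteq> S1"
    and c: "0 \<le> c" "2 * c * card N \<le> card S1" "2 * c \<le> d * \<gamma>"
  shows "card N * (c / (1 + c)) * (x s - x t)\<^sup>2
    \<le> dirichlet_form (S1 \<union> S2 \<union> {s, t}) (constr_adj S1 S2 E s t N {}) x x"
proof -
  interpret regular_expander S1 E d \<gamma> by fact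
  define y where "y w = x w - x t" for w
  have "(\<Sum>w\<in>S1. (y w)\<^sup>2) \<le> (\<Sum>w\<in>S1 \<union> S2. (x t - x w)\<^sup>2)"
    using finite_S1 finite_S2 by (simp add: y_def power2_commute sum_mono2)
  moreover have "c * (\<Sum>w\<in>N. (y w)\<^sup>2) \<le> (\<Sum>w\<in>S1. (y w)\<^sup>2) + dirichlet_form S1 E x x"
    using subset_mass_bound[OF N c, of y] dirichlet_form_diff_const[of S1 E x "x t" x "x t"]
    by (simp add: y_def[abs_def])
  moreover have "card N * (c / (1 + c)) * (x s - x t)\<^sup>2 \<le> (\<Sum>w\<in>N. (x s - x w)\<^sup>2) + c * (\<Sum>w\<in>N. (y w)\<^sup>2)"
  proof -
    have "card N * (c / (1 + c)) * (x s - x t)\<^sup>2 = (\<Sum>w\<in>N. c / (1 + c) * (x s - x t)\<^sup>2)"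
      by simp
    also have "\<dots> \<le> (\<Sum>w\<in>N. (x s - x t - y w)\<^sup>2 + c * (y w)\<^sup>2)"
      using c(1) by (intro sum_mono sq_diff_add_weighted_sq_ge)
    finally show ?thesis
      by (simp add: y_def sum.distrib sum_distrib_left)
  qed
  moreover have "dirichlet_form (S1 \<union> S2 \<union> {s, t}) (constr_adj S1 S2 E s t N {}) x x
      = (\<Sum>w\<in>N. (x s - x w)\<^sup>2) + (\<Sum>w\<in>S1 \<union> S2. (x t - x w)\<^sup>2) + dirichlet_form S1 E x x"
    using N dirichlet_form_constr[of N "{}" x] by auto
  ultimately show ?thesis
    by linarith
qed

lemma eff_res_expander_side_le:
  fixes c \<gamma> :: real
  assumes "regular_expander S1 E d \<gamma>" and N: "N \<subseteq> S1" "N \<noteq> {}"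
    and c: "0 < c" "2 * c * card N \<le> card S1" "2 * c \<le> d * \<gamma>"
  shows "eff_res (S1 \<union> S2 \<union> {s, t}) (constr_adj S1 S2 E s t N {}) s t \<le> (1 + c) / (c * card N)"
proof -
  interpret connected_graph "S1 \<union> S2 \<union> {s, t}" "constr_adj S1 S2 E s t N {}"
    using N by (intro connected_graph_constr) auto
  define K where "K = card N * (c / (1 + c))"
  have "K * eff_res (S1 \<union> S2 \<union> {s, t}) (constr_adj S1 S2 E s t N {}) s t \<le> 1"
    unfolding K_def using assms(1) N(1) c
    by (intro eff_res_le_inverse dirichlet_form_expander_side_ge) auto
  moreover have "0 < K"
    using N c finite_S1 by (simp add: K_def card_gt_0_iff finite_subset)
  ultimately have "eff_res (S1 \<union> S2 \<union> {s, t}) (constr_adj S1 S2 E s t N {}) s t \<le> 1 / K"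
    by (simp add: pos_le_divide_eq mult.commute)
  also have "1 / K = (1 + c) / (c * card N)"
    by (simp add: K_def)
  finally show ?thesis .
qed

lemma dirichlet_form_test_potential:
  assumes N: "N1 \<subseteq> S1" "N2 \<subseteq> S2"
  shows "dirichlet_form (S1 \<union> S2 \<union> {s, t}) (constr_adj S1 S2 E s t N1 N2)
    (test_potential s N2) (test_potential s N2) = card N1 + card N2 / 2"
proof -
  let ?\<psi> = "test_potential s N2"
  have fin: "finite N1" "finite N2"
    using N finite_S1 finite_S2 finite_subset by auto
  have disj: "N1 \<inter> N2 = {}"
    using N disjoint by auto
  have "(\<Sum>w\<in>N1. (?\<psi> s - ?\<psi> w)\<^sup>2) = (\<Sum>w\<in>N1. 1)"
    using N s_notin disj by (intro sum.cong) (auto simp: test_potential_def)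
  moreover have "(\<Sum>w\<in>N2. (?\<psi> s - ?\<psi> w)\<^sup>2) = (\<Sum>w\<in>N2. 1 / 4)"
    using N s_notin by (intro sum.cong) (auto simp: test_potential_def power2_eq_square)
  ultimately have "(\<Sum>w\<in>N1 \<union> N2. (?\<psi> s - ?\<psi> w)\<^sup>2) = (\<Sum>w\<in>N1. 1) + (\<Sum>w\<in>N2. 1 / 4)"
    using fin disj by (simp add: sum.union_disjoint)
  moreover have "(\<Sum>w\<in>S1 \<union> S2. (?\<psi> t - ?\<psi> w)\<^sup>2) = (\<Sum>w\<in>N2. 1 / 4)"
  proof -
    have "(\<Sum>w\<in>S1 \<union> S2. (?\<psi> t - ?\<psi> w)\<^sup>2) = (\<Sum>w\<in>S1 \<union> S2. if w \<in> N2 then 1 / 4 else 0)"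
      using s_notin s_ne_t t_notin N by (intro sum.cong) (auto simp: test_potential_def power2_eq_square)
    also have "\<dots> = (\<Sum>w\<in>(S1 \<union> S2) \<inter> N2. 1 / 4)"
      using finite_S1 finite_S2 by (subst sum.inter_restrict) auto
    also have "(S1 \<union> S2) \<inter> N2 = N2"
      using N by blast
    finally show ?thesis .
  qed
  moreover have "dirichlet_form S1 E ?\<psi> ?\<psi> = 0"
  proof -
    have "\<forall>w\<in>S1. ?\<psi> w = 0"
      using s_notin N disjoint by (auto simp: test_potential_def)
    then show ?thesis
      by (auto simp: dirichlet_form_def intro!: sum.neutral)
  qed
  ultimately show ?thesis
    using N dirichlet_form_constr[of N1 N2 ?\<psi>] by (simp add: le_supI1 le_supI2)
qed

lemma eff_res_ge_test_potential:
  assumes N: "N1 \<subseteq> S1" "N2 \<subseteq> S2" "N1 \<union> N2 \<noteq> {}"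
  shows "1 / (card N1 + card N2 / 2) \<le> eff_res (S1 \<union> S2 \<union> {s, t}) (constr_adj S1 S2 E s t N1 N2) s t"
proof -
  interpret connected_graph "S1 \<union> S2 \<union> {s, t}" "constr_adj S1 S2 E s t N1 N2"
    using N by (intro connected_graph_constr) auto
  have "test_potential s N2 s - test_potential s N2 t = 1"
    using s_ne_t t_notin N by (auto simp: test_potential_def)
  then have "1 \<le> (card N1 + card N2 / 2) * eff_res (S1 \<union> S2 \<union> {s, t}) (constr_adj S1 S2 E s t N1 N2) s t"
    using eff_res_ge_test_function[of s t "test_potential s N2"] dirichlet_form_test_potential[OF N(1,2)]
    by simp
  moreover have "0 < card N1 + card N2 / (2 :: real)"
  proof -
    have "0 < card N1 \<or> 0 < card N2"
      using N finite_S1 finite_S2 finite_subset by (auto simp: card_gt_0_iff)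
    then show ?thesis
      by (auto intro: add_pos_nonneg add_nonneg_pos)
  qed
  ultimately show ?thesis
    by (simp add: pos_divide_le_eq mult.commute)
qed

end

lemma construction_parameters:
  fixes \<gamma> \<epsilon> :: real
  assumes \<gamma>: "0 < \<gamma>" and \<epsilon>: "0 < \<epsilon>" "\<epsilon> < 1" and ds_n1: "ds \<le> n1"
    and d_ge: "real d \<ge> max (real ds * ln (real n1)) ((ln (real n1))\<^sup>2)"
    and n1_ge: "n1 \<ge> 2 * d ^ 3"
    and ds_ge: "real ds \<ge> (20 + 20 / \<gamma>) / \<epsilon>"
  shows "20 \<le> real ds" and "2 * (10 / \<epsilon>) * ds \<le> n1" and "2 * (10 / \<epsilon>) \<le> d * \<gamma>"
proof -
  have "0 < 20 + 20 / \<gamma>"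
    using \<gamma> by (simp add: add_pos_pos)
  then have "20 + 20 / \<gamma> \<le> (20 + 20 / \<gamma>) / \<epsilon>"
    using \<epsilon> by (auto simp: le_divide_eq intro!: mult_left_le)
  then show ds20: "20 \<le> real ds"
    using ds_ge \<gamma> by (smt (verit) divide_nonneg_pos)
  then have "exp 1 \<le> real n1"
    using ds_n1 exp_le by linarith
  then have "1 \<le> ln (real n1)"
    using ds20 ds_n1 by (subst ln_ge_iff) auto
  then have d_ds: "real ds \<le> d"
    using d_ge ds20 by (smt (verit) max.bounded_iff mult_le_cancel_left1)
  have "2 * (10 / \<epsilon>) * ds = 20 / \<epsilon> * ds"
    by simp
  also have "\<dots> \<le> real ds * ds"
  proof (rule mult_right_mono)
    have "20 / \<epsilon> \<le> (20 + 20 / \<gamma>) / \<epsilon>"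
      using \<gamma> \<epsilon> by (intro divide_right_mono) auto
    then show "20 / \<epsilon> \<le> real ds"
      using ds_ge by linarith
  qed simp
  also have "\<dots> \<le> real d * d * d"
    using d_ds ds20 by (smt (verit) mult_mono mult_le_cancel_left1 of_nat_0_le_iff)
  also have "\<dots> \<le> n1"
    using n1_ge by (simp add: power3_eq_cube flip: of_nat_mult of_nat_le_iff)
  finally show "2 * (10 / \<epsilon>) * ds \<le> n1" .
  have "20 / \<gamma> / \<epsilon> \<le> d"
    using ds_ge d_ds \<gamma> \<epsilon> by (smt (verit) divide_right_mono)
  then show "2 * (10 / \<epsilon>) \<le> d * \<gamma>"
    using \<gamma> \<epsilon> by (simp add: field_simps)
qed

lemma relative_gap_of_bounds:
  fixes \<epsilon> m r1 r2 :: real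
  assumes \<epsilon>: "0 < \<epsilon>" "\<epsilon> < 1" and m: "0 < m"
    and r1: "r1 \<le> (1 + 10 / \<epsilon>) / (10 / \<epsilon> * m)"
    and r2: "1 / (m * (1 - \<epsilon> / 2)) \<le> r2"
  shows "\<epsilon> / 4 * r1 < \<bar>r1 - r2\<bar>"
proof -
  have "(1 + \<epsilon> / 4) * (1 - \<epsilon> / 2) * (\<epsilon> + 10) = 10 - 3 / 2 * \<epsilon> - 3 / 2 * \<epsilon>\<^sup>2 - \<epsilon> ^ 3 / 8"
    by (simp add: power2_eq_square power3_eq_cube algebra_simps)
  moreover have "0 \<le> \<epsilon>\<^sup>2" "0 \<le> \<epsilon> ^ 3"
    using \<epsilon> by simp_all
  ultimately have "(1 + \<epsilon> / 4) * (1 - \<epsilon> / 2) * (\<epsilon> + 10) < 10"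
    using \<epsilon> by linarith
  moreover have pos: "0 < 10 * m * (1 - \<epsilon> / 2)"
    using \<epsilon> m by simp
  ultimately have "(1 + \<epsilon> / 4) * (1 - \<epsilon> / 2) * (\<epsilon> + 10) / (10 * m * (1 - \<epsilon> / 2))
      < 10 / (10 * m * (1 - \<epsilon> / 2))"
    by (intro divide_strict_right_mono)
  moreover have "(1 + \<epsilon> / 4) * ((1 + 10 / \<epsilon>) / (10 / \<epsilon> * m))
      = (1 + \<epsilon> / 4) * (1 - \<epsilon> / 2) * (\<epsilon> + 10) / (10 * m * (1 - \<epsilon> / 2))"
    using \<epsilon> m by (simp add: field_simps)
  ultimately have "(1 + \<epsilon> / 4) * ((1 + 10 / \<epsilon>) / (10 / \<epsilon> * m)) < 1 / (m * (1 - \<epsilon> / 2))"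
    by simp
  moreover have "(1 + \<epsilon> / 4) * r1 \<le> (1 + \<epsilon> / 4) * ((1 + 10 / \<epsilon>) / (10 / \<epsilon> * m))"
    using r1 \<epsilon> by (intro mult_left_mono) auto
  ultimately have "(1 + \<epsilon> / 4) * r1 < r2"
    using r2 by linarith
  then show ?thesis
    by (auto simp: algebra_simps abs_if)
qed

lemma resistance_gap:
  fixes \<gamma> \<epsilon> :: real
  assumes \<gamma>: "0 < \<gamma>"
    and graph: "finite S1" "finite S2" "S1 \<inter> S2 = {}" "s \<noteq> t" "s \<notin> S1 \<union> S2" "t \<notin> S1 \<union> S2"
    and n1: "card S1 = n1"
    and E: "\<forall>u v. E u v \<longrightarrow> u \<in> S1 \<and> v \<in> S1" "\<forall>u v. E u v \<longrightarrow> E v u" "\<forall>u. \<not> E u u"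
    and regular: "\<forall>u\<in>S1. card {v \<in> S1. E u v} = d" and gap: "spectral_gap S1 E \<ge> \<gamma>"
    and \<epsilon>: "0 < \<epsilon>" "\<epsilon> < 1"
    and d_ge: "real d \<ge> max (real ds * ln (real n1)) ((ln (real n1))\<^sup>2)"
    and n1_ge: "n1 \<ge> 2 * d ^ 3" and k: "\<epsilon> * real ds = real k"
    and ds_ge: "real ds \<ge> (20 + 20 / \<gamma>) / \<epsilon>"
    and N1: "N1 \<subseteq> S1" "card N1 = ds"
    and N2: "N1' \<subseteq> S1" "card N1' = ds - k" "N2' \<subseteq> S2" "card N2' = k"
  shows "\<epsilon> / 4 * eff_res (S1 \<union> S2 \<union> {s, t}) (constr_adj S1 S2 E s t N1 {}) s t
    < \<bar>eff_res (S1 \<union> S2 \<union> {s, t}) (constr_adj S1 S2 E s t N1 {}) s t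
       - eff_res (S1 \<union> S2 \<union> {s, t}) (constr_adj S1 S2 E s t N1' N2') s t\<bar>"
proof -
  interpret lower_bound_construction S1 S2 E s t
    using graph E by unfold_locales auto
  have "ds \<le> n1"
    using card_mono[OF graph(1) N1(1)] N1(2) n1 by simp
  note par = construction_parameters[OF \<gamma> \<epsilon> this d_ge n1_ge ds_ge]
  have "0 < d"
    using par(3) \<gamma> \<epsilon> by (cases d) auto
  then have "regular_expander S1 E d \<gamma>"
    using graph(1) E regular gap by unfold_locales auto
  moreover have "N1 \<noteq> {}"
    using N1(2) par(1) by auto
  ultimately have r1: "eff_res (S1 \<union> S2 \<union> {s, t}) (constr_adj S1 S2 E s t N1 {}) s t
      \<le> (1 + 10 / \<epsilon>) / (10 / \<epsilon> * ds)"
    using eff_res_expander_side_le[of d \<gamma> N1 "10 / \<epsilon>"] N1 par n1 \<epsilon> by auto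
  have "k \<le> ds"
    using k \<epsilon> by (metis mult_left_le_one_le of_nat_0_le_iff of_nat_le_iff less_le)
  then have "real (card N1') + real (card N2') / 2 = ds * (1 - \<epsilon> / 2)"
    using N2 k by (simp add: of_nat_diff algebra_simps)
  moreover have "N1' \<union> N2' \<noteq> {}"
    using N2(2,4) \<open>k \<le> ds\<close> par(1) by auto
  ultimately have r2: "1 / (ds * (1 - \<epsilon> / 2))
      \<le> eff_res (S1 \<union> S2 \<union> {s, t}) (constr_adj S1 S2 E s t N1' N2') s t"
    using eff_res_ge_test_potential[of N1' N2'] N2 by simp
  show ?thesis
    using relative_gap_of_bounds[OF \<epsilon> _ r1 r2] par(1) by simp
qed

theorem lemma5p2:
  fixes \<gamma> :: real
  assumes "\<gamma> > 0"
  shows "\<exists>C>0. \<forall>(S1::nat set) (S2::nat set) (E::nat \<Rightarrow> nat \<Rightarrow> bool) (s::nat) (t::nat)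
      (\<epsilon>::real) (d::nat) (ds::nat) (n1::nat) (n2::nat) (k::nat) (N1::nat set) (N1'::nat set) (N2'::nat set).
      finite S1 \<and> finite S2 \<and> S1 \<inter> S2 = {} \<and> s \<noteq> t \<and>
      s \<notin> S1 \<union> S2 \<and> t \<notin> S1 \<union> S2 \<and>
      card S1 = n1 \<and> card S2 = n2 \<and> n2 \<le> n1 \<and>
      (\<forall>u v. E u v \<longrightarrow> u \<in> S1 \<and> v \<in> S1) \<and>
      (\<forall>u v. E u v \<longrightarrow> E v u) \<and> (\<forall>u. \<not> E u u) \<and>
      (\<forall>u\<in>S1. card {v \<in> S1. E u v} = d) \<and>
      spectral_gap S1 E \<ge> \<gamma> \<and>
      0 < \<epsilon> \<and> \<epsilon> < 1 \<and>
      real d \<ge> max (real ds * ln (real n1)) ((ln (real n1))^2) \<and>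
      n1 \<ge> 2 * d^3 \<and>
      \<epsilon> * real ds = real k \<and>
      real ds \<ge> C / \<epsilon> \<and>
      N1 \<subseteq> S1 \<and> card N1 = ds \<and>
      N1' \<subseteq> S1 \<and> card N1' = ds - k \<and> N2' \<subseteq> S2 \<and> card N2' = k
      \<longrightarrow>
      (let V = S1 \<union> S2 \<union> {s, t};
           r1 = eff_res V (constr_adj S1 S2 E s t N1 {}) s t;
           r2 = eff_res V (constr_adj S1 S2 E s t N1' N2') s t
       in \<bar>r1 - r2\<bar> > \<epsilon> / 4 * r1)"
proof (intro exI[of _ "20 + 20 / \<gamma>"] conjI allI impI)
  show "0 < 20 + 20 / \<gamma>"
    using assms by (simp add: add_pos_pos)
qed (unfold Let_def, elim conjE, rule resistance_gap[OF assms]; assumption)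

end
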